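(* Consider the greedy algorithm (described in the context) run on a finite principal left ideal ring $R$ with a respectful order $<$, an ordered basis $B$ of $R^n$ and a left multiplicative property $P$ on $R^n$, producing nested codes $C_0\subseteq C_1\subseteq\dots\subseteq C_n$. Then for every $i\in\{1,\dots,n\}$, every vector $x\in V_i\setminus V_{i-1}$ such that $P[\gamma x+c]$ is true for all $\gamma\in\Gamma$ and all $c\in C_i$ already lies in $C_i$.
   Context: $R$ is a finite principal left ideal ring with unit group $R^\ast$; codes are left submodules of $R^n$. A property $P:R^n\to\{\text{true},\text{false}\}$ is left multiplicative if $P[ux]=P[x]$ for all $u\in R^\ast$, $x\in R^n$. A total order $<$ on $R$ is respectful if for all nonzero $x,y\in R$ with $Rx\supsetneq Ry$ there is $\alpha\in R^\ast$ with $\alpha x<uy$ for all $u\in R^\ast$. Fix an ordered basis $B=(b_1,\dots,b_n)$ of the free left module $R^n$; put $V_0=\{0\}$ and $V_i=Rb_1+\dots+Rb_i$. The lexicographic order on $R^n$: if $x\in V_{i-1}$ and $y\in V_i\setminus V_{i-1}$ then $x<y$; if $x\ne y$ both lie in the level set $V_i\setminus V_{i-1}$, write $x=\sum_{j\le i}x_jb_j$, $y=\sum_{j\le i}y_jb_j$, let $k$ be the largest index with $x_k\ne y_k$, and set $x<y$ iff $x_k<y_k$ in $R$. Fix a set $\Gamma\subseteq R$ containing one generator of each nonzero left ideal of $R$. Greedy algorithm: $C_0=\{0\}$; for $i=1,\dots,n$, let $a_i$ be the smallest vector of $V_i\setminus V_{i-1}$ (if any) such that $P[\gamma a_i+c]$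 is true for all $\gamma\in\Gamma$ and all $c\in C_{i-1}$; if such $a_i$ exists set $C_i=Ra_i+C_{i-1}$, otherwise $C_i=C_{i-1}$. The output $C_n$ is the lexicode $C(<,B,P)$. *)

theory Defs
  imports Main
begin

definition units :: "'a::ring_1 set" where
  "units = {u. \<exists>v. u * v = 1 \<and> v * u = 1}"

definition left_ideal :: "'a::ring_1 set \<Rightarrow> bool" where
  "left_ideal I \<longleftrightarrow> 0 \<in> I \<and> (\<forall>x\<in>I. \<forall>y\<in>I. x + y \<in> I) \<and> (\<forall>r. \<forall>x\<in>I. r * x \<in> I)"

definition lprin :: "'a::ring_1 \<Rightarrow> 'a set" where
  "lprin g = {r * g | r. True}"

definition principal_left_ideal_ring :: "'a::ring_1 itself \<Rightarrow> bool" where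
  "principal_left_ideal_ring _ \<longleftrightarrow> (\<forall>I::'a set. left_ideal I \<longrightarrow> (\<exists>g. I = lprin g))"

definition generator_system :: "'a::ring_1 set \<Rightarrow> bool" where
  "generator_system \<Gamma> \<longleftrightarrow> (\<forall>\<gamma>\<in>\<Gamma>. \<gamma> \<noteq> 0) \<and>
     (\<forall>I. left_ideal I \<and> I \<noteq> {0} \<longrightarrow> (\<exists>!\<gamma>. \<gamma> \<in> \<Gamma> \<and> lprin \<gamma> = I))"

definition strict_total_order :: "('a \<Rightarrow> 'a \<Rightarrow> bool) \<Rightarrow> bool" where
  "strict_total_order lt \<longleftrightarrow> (\<forall>x. \<not> lt x x) \<and>
     (\<forall>x y z. lt x y \<longrightarrow> lt y z \<longrightarrow> lt x z) \<and>
     (\<forall>x y. x \<noteq> y \<longrightarrow> lt x y \<or> lt y x)"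

definition respectful :: "('a::ring_1 \<Rightarrow> 'a \<Rightarrow> bool) \<Rightarrow> bool" where
  "respectful lt \<longleftrightarrow> strict_total_order lt \<and>
     (\<forall>x y. x \<noteq> 0 \<longrightarrow> y \<noteq> 0 \<longrightarrow> lprin y \<subset> lprin x \<longrightarrow>
        (\<exists>\<alpha>\<in>units. \<forall>u\<in>units. lt (\<alpha> * x) (u * y)))"

definition vecs :: "nat \<Rightarrow> (nat \<Rightarrow> 'a::ring_1) set" where
  "vecs n = {x. \<forall>k\<ge>n. x k = 0}"

definition vadd :: "(nat \<Rightarrow> 'a::ring_1) \<Rightarrow> (nat \<Rightarrow> 'a) \<Rightarrow> (nat \<Rightarrow> 'a)" where
  "vadd x y = (\<lambda>k. x k + y k)"

definition vsmult :: "'a::ring_1 \<Rightarrow> (nat \<Rightarrow> 'a) \<Rightarrow> (nat \<Rightarrow> 'a)" where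
  "vsmult r x = (\<lambda>k. r * x k)"

definition lincomb :: "(nat \<Rightarrow> 'a::ring_1) \<Rightarrow> (nat \<Rightarrow> nat \<Rightarrow> 'a) \<Rightarrow> nat \<Rightarrow> (nat \<Rightarrow> 'a)" where
  "lincomb c b i = (\<lambda>k. \<Sum>j\<in>{1..i}. c j * b j k)"

definition is_basis :: "nat \<Rightarrow> (nat \<Rightarrow> nat \<Rightarrow> 'a::ring_1) \<Rightarrow> bool" where
  "is_basis n b \<longleftrightarrow> (\<forall>j\<in>{1..n}. b j \<in> vecs n) \<and>
     (\<forall>x\<in>vecs n. \<exists>c. x = lincomb c b n) \<and>
     (\<forall>c c'. lincomb c b n = lincomb c' b n \<longrightarrow> (\<forall>j\<in>{1..n}. c j = c' j))"

definition Vsp :: "(nat \<Rightarrow> nat \<Rightarrow> 'a::ring_1) \<Rightarrow> nat \<Rightarrow> (nat \<Rightarrow> 'a) set" where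
  "Vsp b i = {lincomb c b i | c. True}"

definition coord :: "nat \<Rightarrow> (nat \<Rightarrow> nat \<Rightarrow> 'a::ring_1) \<Rightarrow> (nat \<Rightarrow> 'a) \<Rightarrow> nat \<Rightarrow> 'a" where
  "coord n b x = (THE c. (\<forall>j. j \<notin> {1..n} \<longrightarrow> c j = 0) \<and> x = lincomb c b n)"

definition lexless :: "nat \<Rightarrow> (nat \<Rightarrow> nat \<Rightarrow> 'a::ring_1) \<Rightarrow> ('a \<Rightarrow> 'a \<Rightarrow> bool)
    \<Rightarrow> (nat \<Rightarrow> 'a) \<Rightarrow> (nat \<Rightarrow> 'a) \<Rightarrow> bool" where
  "lexless n b lt x y \<longleftrightarrow>
     (\<exists>i\<in>{1..n}. x \<in> Vsp b (i - 1) \<and> y \<in> Vsp b i - Vsp b (i - 1)) \<or>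
     (\<exists>i\<in>{1..n}. x \<in> Vsp b i - Vsp b (i - 1) \<and> y \<in> Vsp b i - Vsp b (i - 1) \<and> x \<noteq> y \<and>
        (let k = GREATEST k. k \<le> i \<and> coord n b x k \<noteq> coord n b y k
         in lt (coord n b x k) (coord n b y k)))"

definition left_multiplicative :: "nat \<Rightarrow> ((nat \<Rightarrow> 'a::ring_1) \<Rightarrow> bool) \<Rightarrow> bool" where
  "left_multiplicative n P \<longleftrightarrow> (\<forall>u\<in>units. \<forall>x\<in>vecs n. P (vsmult u x) = P x)"

definition good :: "((nat \<Rightarrow> 'a::ring_1) \<Rightarrow> bool) \<Rightarrow> 'a set \<Rightarrow> (nat \<Rightarrow> 'a) set \<Rightarrow> (nat \<Rightarrow> 'a) \<Rightarrow> bool" where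
  "good P \<Gamma> C a \<longleftrightarrow> (\<forall>\<gamma>\<in>\<Gamma>. \<forall>c\<in>C. P (vadd (vsmult \<gamma> a) c))"

primrec greedy :: "nat \<Rightarrow> (nat \<Rightarrow> nat \<Rightarrow> 'a::ring_1) \<Rightarrow> ('a \<Rightarrow> 'a \<Rightarrow> bool)
    \<Rightarrow> ((nat \<Rightarrow> 'a) \<Rightarrow> bool) \<Rightarrow> 'a set \<Rightarrow> nat \<Rightarrow> (nat \<Rightarrow> 'a) set" where
  "greedy n b lt P \<Gamma> 0 = {\<lambda>k. 0}"
| "greedy n b lt P \<Gamma> (Suc i) =
     (let C = greedy n b lt P \<Gamma> i;
          G = {a \<in> Vsp b (Suc i) - Vsp b i. good P \<Gamma> C a}
      in if G = {} then C
         else (let a = (THE a. a \<in> G \<and> (\<forall>y\<in>G. y \<noteq> a \<longrightarrow> lexless n b lt a y))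
               in {vadd (vsmult r a) c | r c. c \<in> C}))"

end

theory Submission
  imports Defs
begin

text \<open>
  Let \<open>a\<close> be the lexicographically least good vector of level \<open>i\<close> adjoined at step \<open>i\<close>, and
  let \<open>x\<close> be a vector of the same level that is good for \<open>C\<^sub>i\<close>, with top coordinates \<open>X\<close> and \<open>Y\<close>.
  The key claim is \<open>X \<in> R Y\<close>. Otherwise, since \<open>R\<close> is a principal left ideal ring of stable
  range one, some \<open>X + t Y\<close> generates a left ideal strictly larger than \<open>R Y\<close>; respectfulness
  yields a unit \<open>\<alpha>\<close> with \<open>\<alpha> (X + t Y)\<close> below every unit multiple of \<open>Y\<close>, and then
  \<open>\<alpha> (x + t a)\<close> is a good vector of level \<open>i\<close> that is lexicographically smaller than \<open>a\<close>.
  Writing \<open>X = r Y\<close>, the vector \<open>x - r a\<close> lies in \<open>V\<^sub>i\<^sub>-\<^sub>1\<close> and is good for \<open>C\<^sub>i\<close>, so by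
  induction it lies in \<open>C\<^sub>i\<^sub>-\<^sub>1\<close>, whence \<open>x \<in> R a + C\<^sub>i\<^sub>-\<^sub>1 = C\<^sub>i\<close>.

  Stable range one for a finite ring (if \<open>w b + c = 1\<close> with \<open>c\<close> in a left ideal \<open>L\<close>, then
  \<open>b + l\<close> is a unit for some \<open>l \<in> L\<close>) follows by maximising the size of the stable ideal
  \<open>\<Inter>\<^sub>k R u\<^sup>k\<close> over \<open>u \<in> b + L\<close>: if \<open>u\<close> is not a unit and \<open>e = u\<^sup>m\<close> is its Fitting
  idempotent, then perturbing \<open>u\<close> by \<open>(1 - e) (1 - w u) \<in> L\<close> strictly enlarges that ideal.
\<close>

section \<open>Finite rings have stable range one\<close>

lemma lprin_self: "(x::'a::ring_1) \<in> lprin x"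
  unfolding lprin_def by (auto intro: exI[of _ 1])

lemma lprin_subset: "y \<in> lprin x \<Longrightarrow> lprin y \<subseteq> lprin x"
  unfolding lprin_def by (auto simp: mult.assoc[symmetric])

lemma left_ideal_lprin: "left_ideal (lprin x)"
  unfolding left_ideal_def lprin_def
  by (auto simp: distrib_right[symmetric] mult.assoc[symmetric] intro: exI[of _ 0])

lemma left_ideal_0: "left_ideal L \<Longrightarrow> 0 \<in> L"
  unfolding left_ideal_def by blast

lemma left_ideal_add: "left_ideal L \<Longrightarrow> x \<in> L \<Longrightarrow> y \<in> L \<Longrightarrow> x + y \<in> L"
  unfolding left_ideal_def by blast

lemma left_ideal_mult: "left_ideal L \<Longrightarrow> x \<in> L \<Longrightarrow> r * x \<in> L"
  unfolding left_ideal_def by blast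

lemma left_ideal_diff: "left_ideal L \<Longrightarrow> x \<in> L \<Longrightarrow> y \<in> L \<Longrightarrow> x - y \<in> L"
  using left_ideal_add[of L x "(-1) * y"] left_ideal_mult[of L y "-1"] by simp

lemma one_in_units: "1 \<in> units"
  unfolding units_def by auto

lemma units_mult_nonzero:
  assumes "u \<in> units" "w \<noteq> 0"
  shows "u * w \<noteq> 0" "w * u \<noteq> 0"
proof -
  obtain v where "u * v = 1" "v * u = 1" using assms(1) unfolding units_def by blast
  then have "w = v * (u * w)" "w = (w * u) * v" by (simp_all add: mult.assoc[symmetric] mult.assoc)
  then show "u * w \<noteq> 0" "w * u \<noteq> 0" using assms(2) by auto
qed

lemma power_eq_1_imp_unit:
  fixes u :: "'a::ring_1"
  assumes "m \<ge> 1" "u ^ m = 1"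
  shows "u \<in> units"
proof -
  obtain k where "m = Suc k" using assms(1) by (cases m) auto
  then have "u * u ^ k = 1" "u ^ k * u = 1" using assms(2) by (simp_all add: power_commutes)
  then show ?thesis unfolding units_def by blast
qed

lemma finite_ring_power_idempotent:
  fixes u :: "'a::{ring_1,finite}"
  obtains m where "m \<ge> 1" "u ^ (2 * m) = u ^ m"
proof -
  have "\<not> inj (\<lambda>k::nat. u ^ k)"
    using finite_imageD[of "\<lambda>k::nat. u ^ k" UNIV] by auto
  then obtain i j where ij: "i < j" "u ^ i = u ^ j"
    unfolding inj_def by (metis linorder_neqE_nat)
  define p where "p = j - i"
  have periodic: "u ^ (k + q * p) = u ^ k" if "i \<le> k" for k q
  proof (induction q)
    case (Suc q)
    have "k + Suc q * p = (k + q * p - i) + j"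
      using that ij by (simp add: p_def)
    then have "u ^ (k + Suc q * p) = u ^ (k + q * p - i) * u ^ j"
      by (simp add: power_add)
    also have "\<dots> = u ^ (k + q * p - i) * u ^ i"
      using ij by simp
    also have "\<dots> = u ^ (k + q * p)"
      using that by (simp flip: power_add)
    finally show ?case using Suc by simp
  qed simp
  define m where "m = (i + 1) * p"
  have "1 \<le> p" using ij by (simp add: p_def)
  then have "m \<ge> 1" "i \<le> m"
    using mult_le_mono2[of 1 p "i + 1"] by (simp_all add: m_def)
  moreover have "2 * m = m + (i + 1) * p" by (simp add: m_def)
  ultimately show ?thesis using that periodic[of m "i + 1"] by metis
qed

lemma power_idempotent_mult:
  fixes u :: "'a::ring_1"
  assumes "u ^ (2 * m) = u ^ m"
  shows "u ^ (Suc j * m) = u ^ m"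
proof (induction j)
  case (Suc j)
  have "u ^ (Suc (Suc j) * m) = u ^ m * u ^ (Suc j * m)" by (simp flip: power_add)
  also have "\<dots> = u ^ (2 * m)" using Suc by (simp add: mult_2 flip: power_add)
  finally show ?case using assms by simp
qed simp

definition stable_lprin :: "'a::ring_1 \<Rightarrow> 'a set" where
  "stable_lprin u = (\<Inter>k. lprin (u ^ k))"

lemma stable_lprin_eq:
  fixes u :: "'a::ring_1"
  assumes "m \<ge> 1" "u ^ (2 * m) = u ^ m"
  shows "stable_lprin u = lprin (u ^ m)"
proof
  show "lprin (u ^ m) \<subseteq> stable_lprin u"
    unfolding stable_lprin_def
  proof (intro INT_greatest lprin_subset)
    fix k
    have "k \<le> Suc k * m" using assms(1) mult_le_mono2[of 1 m "Suc k"] by simp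
    then have "u ^ m = u ^ (Suc k * m - k) * u ^ k"
      using power_idempotent_mult[OF assms(2)] by (metis le_add_diff_inverse2 power_add)
    then show "u ^ m \<in> lprin (u ^ k)" unfolding lprin_def by blast
  qed
qed (auto simp: stable_lprin_def)

lemma power_mult_commuting_idempotent:
  fixes a p :: "'a::ring_1"
  assumes "a * p = p * a" "p * p = p"
  shows "(a * p) ^ Suc k = a ^ Suc k * p"
proof (induction k)
  case (Suc k)
  have "(a * p) ^ Suc (Suc k) = a * (p * a ^ Suc k) * p"
    using Suc by (simp add: mult.assoc)
  also have "\<dots> = a * a ^ Suc k * (p * p)"
    by (simp only: power_commuting_commutes[OF assms(1), symmetric] mult.assoc)
  also have "\<dots> = a ^ Suc (Suc k) * p"
    by (simp only: assms(2) power_Suc)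
  finally show ?case .
qed simp

lemma sum_power_mult_one_diff:
  fixes D :: "'a::ring_1"
  shows "(\<Sum>j<k. D ^ j) * (1 - D) = 1 - D ^ k"
proof (induction k)
  case (Suc k)
  have "(\<Sum>j<Suc k. D ^ j) * (1 - D) = 1 - D ^ k + D ^ k * (1 - D)"
    using Suc by (simp add: distrib_right)
  also have "\<dots> = 1 - D ^ Suc k"
    by (simp add: algebra_simps power_Suc2 power_commutes)
  finally show ?case .
qed simp

lemma left_multiple_of_nilpotent_eq_0:
  fixes v N f :: "'a::ring_1"
  assumes "v * N = f" "f * N = N" "N ^ m = 0"
  shows "f = 0"
proof -
  have f_eq: "f = v ^ Suc j * N ^ Suc j" for j
  proof (induction j)
    case (Suc j)
    have "v ^ Suc (Suc j) * N ^ Suc (Suc j) = v * (v ^ Suc j * N ^ Suc j) * N"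
      by (simp only: power_Suc[of v "Suc j"] power_Suc2[of N "Suc j"] mult.assoc)
    then show ?case using Suc assms(1,2) by (simp add: mult.assoc)
  qed (use assms(1) in simp)
  show ?thesis
  proof (cases m)
    case 0
    then have "(1::'a) = 0" using assms(3) by simp
    then show ?thesis by (metis mult_1_right mult_zero_right)
  next
    case (Suc k)
    then show ?thesis using f_eq[of k] assms(3) by simp
  qed
qed

lemma corner_not_nilpotent:
  fixes D e f N V :: "'a::ring_1"
  assumes "1 - D = e + V * N" "e * f = 0" "f * N = N" "N * f = N" "N ^ m = 0" "f \<noteq> 0"
  shows "D ^ k \<noteq> 0"
proof
  assume "D ^ k = 0"
  then have "(\<Sum>j<k. D ^ j) * (e + V * N) * f = f"
    using sum_power_mult_one_diff[of D k] assms(1) by simp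
  then have "(\<Sum>j<k. D ^ j) * V * N = f"
    using assms(2,4) by (simp add: distrib_left distrib_right mult.assoc)
  then have "f = 0" using assms(3,5) by (rule left_multiple_of_nilpotent_eq_0)
  then show False using assms(6) by simp
qed

lemma idempotent_power_mult_perturbed_power:
  fixes u x :: "'a::ring_1"
  assumes "u ^ (2 * m) = u ^ m"
  shows "u ^ m * (u + (1 - u ^ m) * x) ^ k = u ^ k * u ^ m"
proof (induction k)
  case (Suc k)
  have "u ^ m * u ^ m = u ^ m" using assms by (simp only: mult_2 power_add)
  then have "u ^ m * (u + (1 - u ^ m) * x) = u * u ^ m"
    by (simp add: distrib_left right_diff_distrib power_commutes flip: mult.assoc)
  then have "u ^ m * (u + (1 - u ^ m) * x) ^ Suc k = u * (u ^ m * (u + (1 - u ^ m) * x) ^ k)"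
    by (simp flip: mult.assoc)
  then show ?case by (simp add: Suc mult.assoc)
qed simp

lemma corner_power_eq:
  fixes e f v :: "'a::ring_1"
  assumes "e + f = 1" "f * f = f" "\<And>k. e * v ^ k * f = 0"
  shows "f * v ^ k * f = (f * v * f) ^ k * f"
proof (induction k)
  case (Suc k)
  have ff: "f * (f * x) = f * x" for x using assms(2) by (simp flip: mult.assoc)
  have "f * v ^ Suc k * f = f * v * ((e + f) * v ^ k * f)" by (simp add: assms(1) mult.assoc)
  also have "\<dots> = f * v * (e * v ^ k * f) + f * v * f * (f * v ^ k * f)"
    by (simp add: distrib_left distrib_right mult.assoc ff)
  also have "\<dots> = (f * v * f) ^ Suc k * f"
    using Suc assms(3) by (simp add: mult.assoc)
  finally show ?case .
qed (simp add: assms(2))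

lemma corner_power_nonzero:
  fixes u w :: "'a::ring_1"
  assumes m: "m \<ge> 1" and idem: "u ^ (2 * m) = u ^ m" and "u ^ m \<noteq> 1"
  shows "(1 - u ^ m) * (u + (1 - u ^ m) * (1 - w * u)) ^ k * (1 - u ^ m) \<noteq> 0"
proof -
  define e f where "e = u ^ m" and "f = 1 - e"
  define u' where "u' = u + f * (1 - w * u)"
  define N W D where "N = u * f" and "W = f * w * f" and "D = f * u' * f"
  have ee: "e * e = e" using idem by (simp add: e_def mult_2 power_add)
  then have ef: "e * f = 0" "f * e = 0" and ff: "f * f = f" "f * (f * x) = f * x" for x
    by (simp_all add: f_def algebra_simps flip: mult.assoc)
  have uf: "u * f = f * u" by (simp add: f_def e_def algebra_simps power_commutes)
  have N_nilpotent: "N ^ m = 0"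
  proof -
    obtain j where "m = Suc j" using m by (cases m) auto
    then show ?thesis
      using power_mult_commuting_idempotent[OF uf ff(1), of j] ef by (simp add: N_def e_def)
  qed
  have fN: "f * N = N" using ff by (simp add: N_def uf)
  have Nf: "N * f = N" using ff by (simp add: N_def mult.assoc)
  have "f * (1 - w * u) * f = f - W * N"
    using fN ff by (simp add: W_def N_def algebra_simps)
  moreover have "f * u * f = N"
    using ff by (simp add: N_def mult.assoc flip: uf)
  ultimately have "D = N + f - W * N"
    using ff by (simp add: D_def u'_def distrib_left distrib_right mult.assoc)
  \<comment> \<open>on the corner ring \<open>f R f\<close>, \<open>D\<close> is the unit \<open>f\<close> perturbed by a multiple of the nilpotent \<open>N\<close>\<close>
  then have "1 - D = e + (W - 1) * N"
    by (simp add: f_def algebra_simps)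
  moreover have "f \<noteq> 0" using assms(3) by (simp add: f_def e_def)
  ultimately have D_not_nilpotent: "D ^ k \<noteq> 0" for k
    using corner_not_nilpotent[OF _ ef(1) fN Nf N_nilpotent] by blast
  have "e * u' ^ k * f = 0" for k
    using idempotent_power_mult_perturbed_power[OF idem, of "1 - w * u" k] ef(1)
    by (simp add: e_def f_def u'_def mult.assoc)
  then have corner: "f * u' ^ k * f = D ^ k * f" for k
    unfolding D_def by (intro corner_power_eq[OF _ ff(1)]) (simp_all add: f_def)
  have "D ^ Suc k = D ^ k * f * (u' * f)"
    by (simp only: power_Suc2 D_def mult.assoc)
  then have "f * u' ^ k * f \<noteq> 0"
    using corner[of k] D_not_nilpotent[of "Suc k"] by auto
  then show ?thesis by (simp add: f_def e_def u'_def)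
qed

lemma stable_lprin_card_increase:
  fixes u w :: "'a::{ring_1,finite}"
  assumes "u \<notin> units"
  obtains r where "card (stable_lprin u) < card (stable_lprin (u + r * (1 - w * u)))"
proof -
  obtain m where m: "m \<ge> 1" "u ^ (2 * m) = u ^ m" by (rule finite_ring_power_idempotent)
  define u' where "u' = u + (1 - u ^ m) * (1 - w * u)"
  obtain m' where m': "m' \<ge> 1" "u' ^ (2 * m') = u' ^ m'" by (rule finite_ring_power_idempotent)
  have ee: "u ^ m * u ^ m = u ^ m" using m(2) by (simp only: mult_2 power_add)
  have "u ^ m \<in> lprin (u ^ m')"
    using stable_lprin_eq[OF m] lprin_self[of "u ^ m"] unfolding stable_lprin_def by blast
  then obtain s where "u ^ m = s * u ^ m'" unfolding lprin_def by blast
  then have "u ^ m = s * u ^ m' * u ^ m" using ee by simp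
  also have "\<dots> = (s * u ^ m) * u' ^ m'"
    using idempotent_power_mult_perturbed_power[OF m(2), of "1 - w * u" m']
    by (simp add: u'_def mult.assoc)
  finally have "u ^ m \<in> lprin (u' ^ m')" unfolding lprin_def by blast
  then have "lprin (u ^ m) \<subseteq> lprin (u' ^ m')" by (rule lprin_subset)
  moreover have "(1 - u ^ m) * u' ^ m' \<in> lprin (u' ^ m')" unfolding lprin_def by blast
  moreover have "(1 - u ^ m) * u' ^ m' \<notin> lprin (u ^ m)"
  proof
    assume "(1 - u ^ m) * u' ^ m' \<in> lprin (u ^ m)"
    then obtain t where "(1 - u ^ m) * u' ^ m' = t * u ^ m" unfolding lprin_def by blast
    then have "(1 - u ^ m) * u' ^ m' * (1 - u ^ m) = t * (u ^ m - u ^ m * u ^ m)"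
      by (simp add: mult.assoc right_diff_distrib)
    moreover have "u ^ m \<noteq> 1" using assms power_eq_1_imp_unit[OF m(1)] by blast
    ultimately show False using corner_power_nonzero[OF m] ee by (simp add: u'_def)
  qed
  ultimately have "lprin (u ^ m) \<subset> lprin (u' ^ m')" by blast
  then have "card (stable_lprin u) < card (stable_lprin u')"
    using stable_lprin_eq[OF m] stable_lprin_eq[OF m'] by (simp add: psubset_card_mono)
  then show ?thesis using that u'_def by blast
qed

lemma stable_range_one:
  fixes b :: "'a::{ring_1,finite}"
  assumes L: "left_ideal L" and "w * b + c = 1" "c \<in> L"
  obtains l where "l \<in> L" "b + l \<in> units"
proof -
  have "card (stable_lprin x) < Suc (card (UNIV :: 'a set))" for x :: 'a
    by (simp add: card_mono le_imp_less_Suc)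
  then obtain l where l: "l \<in> L"
    and l_max: "\<And>l'. l' \<in> L \<Longrightarrow> card (stable_lprin (b + l')) \<le> card (stable_lprin (b + l))"
    using ex_has_greatest_nat[of "\<lambda>l. l \<in> L" 0 "\<lambda>l. card (stable_lprin (b + l))"]
      left_ideal_0[OF L] by blast
  have "b + l \<in> units"
  proof (rule ccontr)
    assume "b + l \<notin> units"
    then obtain r where
      r: "card (stable_lprin (b + l)) < card (stable_lprin (b + l + r * (1 - w * (b + l))))"
      by (rule stable_lprin_card_increase)
    have "1 - w * (b + l) = c - w * l" using assms(2) by (simp add: algebra_simps)
    then have "l + r * (1 - w * (b + l)) \<in> L"
      using L l assms(3) by (simp add: left_ideal_add left_ideal_mult left_ideal_diff)
    then show False using l_max r by (fastforce simp: add.assoc)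
  qed
  then show ?thesis using l that by blast
qed

lemma left_ideal_left_annihilator: "left_ideal {z. z * g = 0}"
  unfolding left_ideal_def by (simp add: distrib_right mult.assoc)

lemma lprin_eq_imp_unit_mult:
  fixes r s :: "'a::{ring_1,finite}"
  assumes "lprin r = lprin s"
  obtains u where "u \<in> units" "r = u * s"
proof -
  obtain p q where p: "r = p * s" and q: "s = q * r"
    using assms lprin_self[of r] lprin_self[of s] unfolding lprin_def by blast
  have "(1 - q * p) * s = 0" using p q by (simp add: left_diff_distrib mult.assoc)
  then obtain z where "z * s = 0" "p + z \<in> units"
    using stable_range_one[OF left_ideal_left_annihilator, of q p "1 - q * p" s] by auto
  moreover have "(p + z) * s = r" using \<open>z * s = 0\<close> p by (simp add: distrib_right)
  ultimately show ?thesis using that by metis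
qed

lemma lprin_unit_mult:
  assumes "v \<in> units"
  shows "lprin (v * g) = lprin g"
proof
  obtain v' where "v' * v = 1" using assms unfolding units_def by blast
  then have "g = v' * (v * g)" by (simp flip: mult.assoc)
  then have "g \<in> lprin (v * g)" unfolding lprin_def by blast
  then show "lprin g \<subseteq> lprin (v * g)" by (rule lprin_subset)
  have "v * g \<in> lprin g" unfolding lprin_def by blast
  then show "lprin (v * g) \<subseteq> lprin g" by (rule lprin_subset)
qed

lemma left_ideal_sum:
  assumes I: "left_ideal I" and J: "left_ideal J"
  shows "left_ideal {i + j | i j. i \<in> I \<and> j \<in> J}"
  unfolding left_ideal_def
proof (intro conjI ballI allI)
  show "0 \<in> {i + j | i j. i \<in> I \<and> j \<in> J}"
    using left_ideal_0[OF I] left_ideal_0[OF J] by force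
next
  fix x y assume "x \<in> {i + j | i j. i \<in> I \<and> j \<in> J}" "y \<in> {i + j | i j. i \<in> I \<and> j \<in> J}"
  then obtain i j i' j' where "x = i + j" "y = i' + j'" "i \<in> I" "j \<in> J" "i' \<in> I" "j' \<in> J"
    by blast
  moreover have "i + j + (i' + j') = (i + i') + (j + j')" by (simp add: algebra_simps)
  ultimately show "x + y \<in> {i + j | i j. i \<in> I \<and> j \<in> J}"
    using left_ideal_add[OF I] left_ideal_add[OF J] by blast
next
  fix r x assume "x \<in> {i + j | i j. i \<in> I \<and> j \<in> J}"
  then obtain i j where "x = i + j" "i \<in> I" "j \<in> J" by blast
  then show "r * x \<in> {i + j | i j. i \<in> I \<and> j \<in> J}"
    using left_ideal_mult[OF I] left_ideal_mult[OF J] distrib_left by blast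
qed

lemma lprin_psubset_add_mult:
  fixes X Y :: "'a::{ring_1,finite}"
  assumes PL: "principal_left_ideal_ring TYPE('a)" and X: "X \<notin> lprin Y"
  obtains t where "lprin Y \<subset> lprin (X + t * Y)" "X + t * Y \<noteq> 0"
proof -
  let ?I = "{i + j | i j. i \<in> lprin X \<and> j \<in> lprin Y}"
  obtain g where I: "?I = lprin g"
    using PL left_ideal_sum[OF left_ideal_lprin left_ideal_lprin]
    unfolding principal_left_ideal_ring_def by blast
  have "X = X + 0 * Y" "Y = 0 * X + Y" by simp_all
  then have "X \<in> lprin g" "Y \<in> lprin g"
    unfolding I[symmetric] using lprin_self[of X] lprin_self[of Y] unfolding lprin_def by blast+
  then obtain x' y' where x': "X = x' * g" and y': "Y = y' * g" unfolding lprin_def by blast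
  have "g \<in> ?I" unfolding I by (rule lprin_self)
  then obtain p q where g: "g = p * X + q * Y" unfolding lprin_def by blast
  let ?L = "{i + j | i j. i \<in> lprin y' \<and> j \<in> {z. z * g = 0}}"
  have "(1 - p * x' - q * y') * g = 0"
    using g x' y' by (simp add: left_diff_distrib mult.assoc algebra_simps)
  then have "1 - p * x' \<in> ?L" unfolding lprin_def by force
  then obtain l where "l \<in> ?L" and unit: "x' + l \<in> units"
    using stable_range_one[OF left_ideal_sum[OF left_ideal_lprin[of y'] left_ideal_left_annihilator[of g]],
        where w = p and b = x' and c = "1 - p * x'"] by auto
  then obtain t z where l: "l = t * y' + z" and z: "z * g = 0" unfolding lprin_def by blast
  have "(x' + l) * g = X + t * Y" using x' y' l z by (simp add: distrib_right mult.assoc)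
  then have gen: "lprin (X + t * Y) = lprin g" using lprin_unit_mult[OF unit, of g] by simp
  have "lprin Y \<subseteq> lprin g" using \<open>Y \<in> lprin g\<close> by (rule lprin_subset)
  then have "lprin Y \<subset> lprin (X + t * Y)" using gen \<open>X \<in> lprin g\<close> X by blast
  moreover have "X + t * Y \<noteq> 0"
  proof
    assume "X + t * Y = 0"
    then have "X = 0" using gen \<open>X \<in> lprin g\<close> unfolding lprin_def by auto
    then have "X = 0 * Y" by simp
    then show False using X unfolding lprin_def by blast
  qed
  ultimately show ?thesis using that by blast
qed

section \<open>Coordinates and level sets\<close>

abbreviation level_set :: "(nat \<Rightarrow> nat \<Rightarrow> 'a::ring_1) \<Rightarrow> nat \<Rightarrow> (nat \<Rightarrow> 'a) set" where
  "level_set b i \<equiv> Vsp b i - Vsp b (i - 1)"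

lemma finite_vecs: "finite (vecs n :: (nat \<Rightarrow> 'a::{ring_1,finite}) set)"
proof -
  have "vecs n = {x :: nat \<Rightarrow> 'a. \<forall>k. (k \<in> {..<n} \<longrightarrow> x k \<in> UNIV) \<and> (k \<notin> {..<n} \<longrightarrow> x k = 0)}"
    unfolding vecs_def by auto
  then show ?thesis using finite_set_of_finite_funs[of "{..<n}" "UNIV :: 'a set" 0] by simp
qed

lemma lincomb_0: "lincomb c b 0 = (\<lambda>k. 0)"
  unfolding lincomb_def by simp

lemma lincomb_vadd: "vadd (lincomb c b i) (lincomb d b i) = lincomb (\<lambda>j. c j + d j) b i"
  unfolding vadd_def lincomb_def by (simp add: sum.distrib distrib_right)

lemma lincomb_vsmult: "vsmult r (lincomb c b i) = lincomb (\<lambda>j. r * c j) b i"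
  unfolding vsmult_def lincomb_def by (simp add: sum_distrib_left mult.assoc)

lemma lincomb_Suc: "c (Suc i) = 0 \<Longrightarrow> lincomb c b (Suc i) = lincomb c b i"
  unfolding lincomb_def by (simp add: sum.cl_ivl_Suc)

lemma lincomb_cong: "(\<And>j. j \<in> {1..i} \<Longrightarrow> c j = d j) \<Longrightarrow> lincomb c b i = lincomb d b i"
  unfolding lincomb_def by (auto intro!: sum.cong)

lemma VspI: "x = lincomb c b i \<Longrightarrow> x \<in> Vsp b i"
  unfolding Vsp_def by blast

lemma VspE: "x \<in> Vsp b i \<Longrightarrow> (\<And>c. x = lincomb c b i \<Longrightarrow> P) \<Longrightarrow> P"
  unfolding Vsp_def by blast

lemma Vsp_0: "Vsp b 0 = {\<lambda>k. 0}"
  unfolding Vsp_def by (simp add: lincomb_0)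

lemma Vsp_mono:
  assumes "i \<le> j"
  shows "Vsp b i \<subseteq> Vsp b j"
proof
  fix x assume "x \<in> Vsp b i"
  then obtain c where "x = lincomb c b i" by (rule VspE)
  also have "\<dots> = lincomb (\<lambda>k. if k \<le> i then c k else 0) b i"
    by (rule lincomb_cong) simp
  also have "\<dots> = lincomb (\<lambda>k. if k \<le> i then c k else 0) b j"
    unfolding lincomb_def using assms by (intro ext sum.mono_neutral_left) auto
  finally show "x \<in> Vsp b j" by (rule VspI)
qed

lemma zero_in_Vsp: "(\<lambda>k. 0) \<in> Vsp b i"
  using Vsp_mono[of 0 i b] Vsp_0[of b] by auto

lemma vadd_in_Vsp: "x \<in> Vsp b i \<Longrightarrow> y \<in> Vsp b i \<Longrightarrow> vadd x y \<in> Vsp b i"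
  by (elim VspE) (simp add: lincomb_vadd VspI)

lemma vsmult_in_Vsp: "x \<in> Vsp b i \<Longrightarrow> vsmult r x \<in> Vsp b i"
  by (elim VspE) (simp add: lincomb_vsmult VspI)

lemma Vsp_subset_vecs:
  assumes "is_basis n b" "i \<le> n"
  shows "Vsp b i \<subseteq> vecs n"
proof
  fix x assume "x \<in> Vsp b i"
  then obtain c where x: "x = lincomb c b i" by (rule VspE)
  have "\<forall>j\<in>{1..i}. \<forall>k\<ge>n. b j k = 0"
    using assms unfolding is_basis_def vecs_def by auto
  then show "x \<in> vecs n" unfolding vecs_def x lincomb_def by simp
qed

lemma level_set_unique:
  assumes "x \<in> level_set b i" "x \<in> level_set b j" "1 \<le> i" "1 \<le> j"
  shows "i = j"
proof (rule ccontr)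
  assume "i \<noteq> j"
  then have "i \<le> j - 1 \<or> j \<le> i - 1" using assms(3,4) by linarith
  then have "Vsp b i \<subseteq> Vsp b (j - 1) \<or> Vsp b j \<subseteq> Vsp b (i - 1)"
    using Vsp_mono by blast
  then show False using assms(1,2) by blast
qed

lemma coord_lincomb:
  assumes B: "is_basis n b" and i: "i \<le> n"
  shows "coord n b (lincomb c b i) = (\<lambda>k. if k \<in> {1..i} then c k else 0)"
proof -
  define c' where "c' = (\<lambda>k. if k \<in> {1..i} then c k else 0)"
  have "lincomb c b i = lincomb c' b i" unfolding c'_def by (rule lincomb_cong) simp
  also have "\<dots> = lincomb c' b n"
    unfolding lincomb_def using i by (intro ext sum.mono_neutral_left) (auto simp: c'_def)
  finally have eq: "lincomb c b i = lincomb c' b n" .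
  show ?thesis unfolding coord_def c'_def[symmetric]
  proof (rule the_equality)
    show "(\<forall>j. j \<notin> {1..n} \<longrightarrow> c' j = 0) \<and> lincomb c b i = lincomb c' b n"
      using eq i by (auto simp: c'_def)
  next
    fix d assume d: "(\<forall>j. j \<notin> {1..n} \<longrightarrow> d j = 0) \<and> lincomb c b i = lincomb d b n"
    then have "\<forall>j\<in>{1..n}. d j = c' j" using B eq unfolding is_basis_def by metis
    show "d = c'"
    proof
      fix k show "d k = c' k"
        using d i \<open>\<forall>j\<in>{1..n}. d j = c' j\<close> by (cases "k \<in> {1..n}") (auto simp: c'_def)
    qed
  qed
qed

lemma lincomb_coord:
  assumes "is_basis n b" "i \<le> n" "x \<in> Vsp b i"
  shows "lincomb (coord n b x) b i = x"
  using assms(3) by (elim VspE) (auto simp: coord_lincomb[OF assms(1,2)] intro: lincomb_cong)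

lemma coord_eq_0:
  assumes "is_basis n b" "i \<le> n" "x \<in> Vsp b i" "k \<notin> {1..i}"
  shows "coord n b x k = 0"
  using assms(3,4) by (elim VspE) (auto simp: coord_lincomb[OF assms(1,2)])

lemma coord_vadd:
  assumes "is_basis n b" "i \<le> n" "x \<in> Vsp b i" "y \<in> Vsp b i"
  shows "coord n b (vadd x y) k = coord n b x k + coord n b y k"
  using assms(3,4) by (elim VspE) (simp add: lincomb_vadd coord_lincomb[OF assms(1,2)])

lemma coord_vsmult:
  assumes "is_basis n b" "i \<le> n" "x \<in> Vsp b i"
  shows "coord n b (vsmult r x) k = r * coord n b x k"
  using assms(3) by (elim VspE) (simp add: lincomb_vsmult coord_lincomb[OF assms(1,2)])

lemma Vsp_iff_coord_Suc_eq_0: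
  assumes B: "is_basis n b" and i: "Suc i \<le> n" and x: "x \<in> Vsp b (Suc i)"
  shows "x \<in> Vsp b i \<longleftrightarrow> coord n b x (Suc i) = 0"
proof
  assume "x \<in> Vsp b i"
  then show "coord n b x (Suc i) = 0" using coord_eq_0[OF B, of i x "Suc i"] i by simp
next
  assume "coord n b x (Suc i) = 0"
  then have "lincomb (coord n b x) b (Suc i) = lincomb (coord n b x) b i" by (rule lincomb_Suc)
  then show "x \<in> Vsp b i" using lincomb_coord[OF B i x] by (metis VspI)
qed

lemma Vsp_eq_if_coord_eq:
  assumes "is_basis n b" "i \<le> n" "x \<in> Vsp b i" "y \<in> Vsp b i"
    and "\<And>k. k \<in> {1..i} \<Longrightarrow> coord n b x k = coord n b y k"
  shows "x = y"
  by (metis assms lincomb_coord lincomb_cong)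

section \<open>The lexicographic order on a level set\<close>

definition lex_pivot :: "nat \<Rightarrow> (nat \<Rightarrow> nat \<Rightarrow> 'a::ring_1) \<Rightarrow> nat \<Rightarrow> (nat \<Rightarrow> 'a) \<Rightarrow> (nat \<Rightarrow> 'a) \<Rightarrow> nat"
  where "lex_pivot n b i x y = (GREATEST k. k \<le> i \<and> coord n b x k \<noteq> coord n b y k)"

lemma lex_pivot:
  assumes B: "is_basis n b" and i: "i \<le> n" and x: "x \<in> Vsp b i" and y: "y \<in> Vsp b i"
    and "x \<noteq> y"
  shows "lex_pivot n b i x y \<le> i"
    and "coord n b x (lex_pivot n b i x y) \<noteq> coord n b y (lex_pivot n b i x y)"
    and "\<And>j. lex_pivot n b i x y < j \<Longrightarrow> j \<le> i \<Longrightarrow> coord n b x j = coord n b y j"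
proof -
  define Q where "Q = (\<lambda>k. k \<le> i \<and> coord n b x k \<noteq> coord n b y k)"
  have pivot: "lex_pivot n b i x y = Greatest Q" unfolding lex_pivot_def Q_def ..
  have "\<exists>k\<in>{1..i}. coord n b x k \<noteq> coord n b y k"
    using Vsp_eq_if_coord_eq[OF B i x y] \<open>x \<noteq> y\<close> by blast
  then obtain k where "Q k" unfolding Q_def by auto
  moreover have bound: "\<And>k. Q k \<Longrightarrow> k \<le> i" unfolding Q_def by simp
  ultimately have "Q (Greatest Q)" by (rule GreatestI_nat)
  then show "lex_pivot n b i x y \<le> i"
    and "coord n b x (lex_pivot n b i x y) \<noteq> coord n b y (lex_pivot n b i x y)"
    unfolding pivot Q_def by auto
  show "coord n b x j = coord n b y j" if "lex_pivot n b i x y < j" "j \<le> i" for j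
  proof (rule ccontr)
    assume "coord n b x j \<noteq> coord n b y j"
    then have "Q j" using that(2) by (simp add: Q_def)
    then have "j \<le> Greatest Q" using bound by (blast intro: Greatest_le_nat)
    then show False using that(1) pivot by simp
  qed
qed

lemma lex_pivot_eqI:
  assumes "k \<le> i" "coord n b x k \<noteq> coord n b y k"
    and "\<And>j. k < j \<Longrightarrow> j \<le> i \<Longrightarrow> coord n b x j = coord n b y j"
  shows "lex_pivot n b i x y = k"
  unfolding lex_pivot_def
  by (rule Greatest_equality) (use assms le_less_linear in blast)+

lemma lex_pivot_commute: "lex_pivot n b i x y = lex_pivot n b i y x"
  unfolding lex_pivot_def by (simp only: eq_commute)

lemma lexless_level_iff:
  assumes "1 \<le> i" "i \<le> n" "x \<in> level_set b i" "y \<in> level_set b i"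
  shows "lexless n b lt x y \<longleftrightarrow>
    x \<noteq> y \<and> lt (coord n b x (lex_pivot n b i x y)) (coord n b y (lex_pivot n b i x y))"
proof
  assume "lexless n b lt x y"
  then obtain i' where "i' \<in> {1..n}" "y \<in> level_set b i'"
    and "x \<in> Vsp b (i' - 1) \<or> x \<in> level_set b i' \<and> x \<noteq> y \<and>
      lt (coord n b x (lex_pivot n b i' x y)) (coord n b y (lex_pivot n b i' x y))"
    unfolding lexless_def Let_def lex_pivot_def by blast
  moreover from this have "i' = i" using level_set_unique[of y b i' i] assms(1,4) by simp
  ultimately show "x \<noteq> y \<and> lt (coord n b x (lex_pivot n b i x y)) (coord n b y (lex_pivot n b i x y))"
    using assms(3) by auto
next
  assume "x \<noteq> y \<and> lt (coord n b x (lex_pivot n b i x y)) (coord n b y (lex_pivot n b i x y))"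
  moreover have "i \<in> {1..n}" using assms(1,2) by simp
  ultimately show "lexless n b lt x y"
    using assms(3,4) unfolding lexless_def Let_def lex_pivot_def by blast
qed

lemma lexless_level_iff_top:
  assumes "1 \<le> i" "i \<le> n" "x \<in> level_set b i" "y \<in> level_set b i"
    and "coord n b x i \<noteq> coord n b y i"
  shows "lexless n b lt x y \<longleftrightarrow> lt (coord n b x i) (coord n b y i)"
proof -
  have "lex_pivot n b i x y = i" by (rule lex_pivot_eqI) (use assms(5) in auto)
  then show ?thesis using lexless_level_iff[OF assms(1-4)] assms(5) by auto
qed

lemma lexless_level_asym:
  assumes lt: "strict_total_order lt" and i: "1 \<le> i" "i \<le> n"
    and x: "x \<in> level_set b i" and y: "y \<in> level_set b i" and "lexless n b lt x y"
  shows "\<not> lexless n b lt y x"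
proof
  define p where "p = lex_pivot n b i x y"
  assume "lexless n b lt y x"
  then have "lt (coord n b y p) (coord n b x p)"
    using lexless_level_iff[OF i y x] by (simp add: p_def lex_pivot_commute)
  moreover have "lt (coord n b x p) (coord n b y p)"
    using \<open>lexless n b lt x y\<close> lexless_level_iff[OF i x y] by (simp add: p_def)
  ultimately show False using lt unfolding strict_total_order_def by blast
qed

lemma lexless_level_total:
  assumes B: "is_basis n b" and lt: "strict_total_order lt" and i: "1 \<le> i" "i \<le> n"
    and x: "x \<in> level_set b i" and y: "y \<in> level_set b i" and "x \<noteq> y"
  shows "lexless n b lt x y \<or> lexless n b lt y x"
proof -
  define p where "p = lex_pivot n b i x y"
  have "coord n b x p \<noteq> coord n b y p"
    using lex_pivot(2)[OF B i(2) _ _ \<open>x \<noteq> y\<close>] x y by (simp add: p_def)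
  then have "lt (coord n b x p) (coord n b y p) \<or> lt (coord n b y p) (coord n b x p)"
    using lt unfolding strict_total_order_def by blast
  then show ?thesis
    using lexless_level_iff[OF i x y] lexless_level_iff[OF i y x] \<open>x \<noteq> y\<close>
    by (auto simp: p_def lex_pivot_commute)
qed

lemma lexless_level_trans:
  assumes B: "is_basis n b" and lt: "strict_total_order lt" and i: "1 \<le> i" "i \<le> n"
    and x: "x \<in> level_set b i" and y: "y \<in> level_set b i" and z: "z \<in> level_set b i"
    and xy: "lexless n b lt x y" and yz: "lexless n b lt y z"
  shows "lexless n b lt x z"
proof -
  have irrefl: "\<And>p. \<not> lt p p" and trans: "\<And>p q r. lt p q \<Longrightarrow> lt q r \<Longrightarrow> lt p r"
    using lt unfolding strict_total_order_def by blast+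
  define k1 k2 where "k1 = lex_pivot n b i x y" and "k2 = lex_pivot n b i y z"
  have "x \<noteq> y" "lt (coord n b x k1) (coord n b y k1)"
    using xy lexless_level_iff[OF i x y] by (auto simp: k1_def)
  moreover note p1 = lex_pivot[OF B i(2) _ _ \<open>x \<noteq> y\<close>, folded k1_def]
  have "y \<noteq> z" "lt (coord n b y k2) (coord n b z k2)"
    using yz lexless_level_iff[OF i y z] by (auto simp: k2_def)
  moreover note p2 = lex_pivot[OF B i(2) _ _ \<open>y \<noteq> z\<close>, folded k2_def]
  define k where "k = max k1 k2"
  have above: "coord n b x j = coord n b z j" if "k < j" "j \<le> i" for j
    using that x y z p1(3) p2(3) by (simp add: k_def)
  have "lt (coord n b x k) (coord n b z k)"
    using calculation x y z p1 p2 trans by (cases k1 k2 rule: linorder_cases) (auto simp: k_def)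
  moreover have "lex_pivot n b i x z = k"
    using calculation above x y z p1(1) p2(1) irrefl
    by (intro lex_pivot_eqI) (auto simp: k_def)
  moreover have "x \<noteq> z" using calculation irrefl by auto
  ultimately show ?thesis using lexless_level_iff[OF i x z] by simp
qed

lemma finite_total_trans_has_least:
  assumes "finite S" "S \<noteq> {}"
    and total: "\<And>x y. x \<in> S \<Longrightarrow> y \<in> S \<Longrightarrow> x \<noteq> y \<Longrightarrow> r x y \<or> r y x"
    and trans: "\<And>x y z. x \<in> S \<Longrightarrow> y \<in> S \<Longrightarrow> z \<in> S \<Longrightarrow> r x y \<Longrightarrow> r y z \<Longrightarrow> r x z"
  shows "\<exists>a\<in>S. \<forall>y\<in>S. y \<noteq> a \<longrightarrow> r a y"
  using assms
proof (induction S rule: finite_ne_induct)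
  case (insert x F)
  have "\<exists>a\<in>F. \<forall>y\<in>F. y \<noteq> a \<longrightarrow> r a y"
  proof (rule insert.IH)
    show "r u v \<or> r v u" if "u \<in> F" "v \<in> F" "u \<noteq> v" for u v
      using that insert.prems(1)[of u v] by simp
    show "r u v \<Longrightarrow> r v w \<Longrightarrow> r u w" if "u \<in> F" "v \<in> F" "w \<in> F" for u v w
      using that insert.prems(2)[of u v w] by simp
  qed
  then obtain m where m: "m \<in> F" "\<And>y. y \<in> F \<Longrightarrow> y \<noteq> m \<Longrightarrow> r m y" by blast
  show ?case
  proof (cases "r x m")
    case True
    have "r x y" if "y \<in> F" for y
    proof (cases "y = m")
      case False
      then show ?thesis using True m that insert.prems(2)[of x m y] by simp
    qed (use True in simp)
    then show ?thesis by blast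
  next
    case False
    have "x \<noteq> m" using m(1) \<open>x \<notin> F\<close> by blast
    then have "r m x" using False m(1) insert.prems(1)[of x m] by simp
    then show ?thesis using m by blast
  qed
qed blast

lemma finite_strict_total_ex1_least:
  assumes "finite S" "S \<noteq> {}"
    and total: "\<And>x y. x \<in> S \<Longrightarrow> y \<in> S \<Longrightarrow> x \<noteq> y \<Longrightarrow> r x y \<or> r y x"
    and trans: "\<And>x y z. x \<in> S \<Longrightarrow> y \<in> S \<Longrightarrow> z \<in> S \<Longrightarrow> r x y \<Longrightarrow> r y z \<Longrightarrow> r x z"
    and asym: "\<And>x y. x \<in> S \<Longrightarrow> y \<in> S \<Longrightarrow> r x y \<Longrightarrow> \<not> r y x"
  shows "\<exists>!a. a \<in> S \<and> (\<forall>y\<in>S. y \<noteq> a \<longrightarrow> r a y)"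
proof -
  have "\<exists>a\<in>S. \<forall>y\<in>S. y \<noteq> a \<longrightarrow> r a y"
    using assms(1,2) total trans by (rule finite_total_trans_has_least)
  then obtain a where a: "a \<in> S" "\<forall>y\<in>S. y \<noteq> a \<longrightarrow> r a y" by blast
  show ?thesis
  proof (rule ex1I[of _ a])
    fix a' assume a': "a' \<in> S \<and> (\<forall>y\<in>S. y \<noteq> a' \<longrightarrow> r a' y)"
    show "a' = a"
    proof (rule ccontr)
      assume "a' \<noteq> a"
      then have "r a a'" "r a' a" using a a' by auto
      then show False using asym[of a a'] a(1) a' by simp
    qed
  qed (use a in blast)
qed

lemma ex1_lexless_least:
  fixes b :: "nat \<Rightarrow> nat \<Rightarrow> 'a::{ring_1,finite}"
  assumes B: "is_basis n b" and lt: "strict_total_order lt" and i: "1 \<le> i" "i \<le> n"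
    and G: "G \<subseteq> level_set b i" "G \<noteq> {}"
  shows "\<exists>!a. a \<in> G \<and> (\<forall>y\<in>G. y \<noteq> a \<longrightarrow> lexless n b lt a y)"
proof (rule finite_strict_total_ex1_least[OF _ G(2)])
  show "finite G"
    using G(1) Vsp_subset_vecs[OF B i(2)] finite_vecs by (blast intro: finite_subset)
  fix x y z assume "x \<in> G" "y \<in> G" "z \<in> G"
  then have x: "x \<in> level_set b i" and y: "y \<in> level_set b i" and z: "z \<in> level_set b i"
    using G(1) by blast+
  show "x \<noteq> y \<Longrightarrow> lexless n b lt x y \<or> lexless n b lt y x"
    by (rule lexless_level_total[OF B lt i x y])
  show "lexless n b lt x y \<Longrightarrow> lexless n b lt y z \<Longrightarrow> lexless n b lt x z"
    by (rule lexless_level_trans[OF B lt i x y z])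
  show "lexless n b lt x y \<Longrightarrow> \<not> lexless n b lt y x"
    by (rule lexless_level_asym[OF lt i x y])
qed

section \<open>The greedy algorithm\<close>

definition left_submodule :: "(nat \<Rightarrow> 'a::ring_1) set \<Rightarrow> bool" where
  "left_submodule C \<longleftrightarrow>
     (\<lambda>k. 0) \<in> C \<and> (\<forall>x\<in>C. \<forall>y\<in>C. vadd x y \<in> C) \<and> (\<forall>r. \<forall>x\<in>C. vsmult r x \<in> C)"

definition adjoin :: "(nat \<Rightarrow> 'a::ring_1) \<Rightarrow> (nat \<Rightarrow> 'a) set \<Rightarrow> (nat \<Rightarrow> 'a) set" where
  "adjoin a C = {vadd (vsmult r a) c | r c. c \<in> C}"

lemma left_submodule_adjoin:
  assumes "left_submodule C"
  shows "left_submodule (adjoin a C)"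
  unfolding left_submodule_def adjoin_def
proof (intro conjI ballI allI)
  have "(\<lambda>k. 0) = vadd (vsmult 0 a) (\<lambda>k. 0)" unfolding vadd_def vsmult_def by simp
  then show "(\<lambda>k. 0) \<in> {vadd (vsmult r a) c | r c. c \<in> C}"
    using assms unfolding left_submodule_def by blast
next
  fix x y assume "x \<in> {vadd (vsmult r a) c | r c. c \<in> C}" "y \<in> {vadd (vsmult r a) c | r c. c \<in> C}"
  then obtain r c s d where "x = vadd (vsmult r a) c" "y = vadd (vsmult s a) d" "c \<in> C" "d \<in> C"
    by blast
  moreover have "vadd (vadd (vsmult r a) c) (vadd (vsmult s a) d) = vadd (vsmult (r + s) a) (vadd c d)"
    unfolding vadd_def vsmult_def by (simp add: algebra_simps)
  ultimately show "vadd x y \<in> {vadd (vsmult r a) c | r c. c \<in> C}"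
    using assms unfolding left_submodule_def by blast
next
  fix t x assume "x \<in> {vadd (vsmult r a) c | r c. c \<in> C}"
  then obtain r c where "x = vadd (vsmult r a) c" "c \<in> C" by blast
  moreover have "vsmult t (vadd (vsmult r a) c) = vadd (vsmult (t * r) a) (vsmult t c)"
    unfolding vadd_def vsmult_def by (simp add: algebra_simps)
  ultimately show "vsmult t x \<in> {vadd (vsmult r a) c | r c. c \<in> C}"
    using assms unfolding left_submodule_def by blast
qed

lemma subset_adjoin: "C \<subseteq> adjoin a C"
proof
  fix c assume "c \<in> C"
  moreover have "c = vadd (vsmult 0 a) c" unfolding vadd_def vsmult_def by simp
  ultimately show "c \<in> adjoin a C" unfolding adjoin_def by blast
qed

lemma self_in_adjoin:
  assumes "left_submodule C"
  shows "a \<in> adjoin a C"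
proof -
  have "a = vadd (vsmult 1 a) (\<lambda>k. 0)" unfolding vadd_def vsmult_def by simp
  then show ?thesis using assms unfolding adjoin_def left_submodule_def by blast
qed

lemma adjoin_subset_Vsp:
  "a \<in> Vsp b i \<Longrightarrow> C \<subseteq> Vsp b i \<Longrightarrow> adjoin a C \<subseteq> Vsp b i"
  unfolding adjoin_def by (auto intro: vadd_in_Vsp vsmult_in_Vsp)

lemma greedy_Suc_if:
  "greedy n b lt P \<Gamma> (Suc i) =
    (let G = {a \<in> Vsp b (Suc i) - Vsp b i. good P \<Gamma> (greedy n b lt P \<Gamma> i) a}
     in if G = {} then greedy n b lt P \<Gamma> i
        else adjoin (THE a. a \<in> G \<and> (\<forall>y\<in>G. y \<noteq> a \<longrightarrow> lexless n b lt a y)) (greedy n b lt P \<Gamma> i))"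
  by (simp only: greedy.simps Let_def adjoin_def)

lemma left_submodule_greedy: "left_submodule (greedy n b lt P \<Gamma> i)"
proof (induction i)
  case 0
  show ?case unfolding left_submodule_def vadd_def vsmult_def by simp
next
  case (Suc i)
  then show ?case by (simp add: greedy_Suc_if Let_def left_submodule_adjoin del: greedy.simps)
qed

lemma greedy_mono: "i \<le> j \<Longrightarrow> greedy n b lt P \<Gamma> i \<subseteq> greedy n b lt P \<Gamma> j"
proof (induction j)
  case (Suc j)
  have "greedy n b lt P \<Gamma> j \<subseteq> greedy n b lt P \<Gamma> (Suc j)"
    by (simp add: greedy_Suc_if Let_def subset_adjoin del: greedy.simps)
  then show ?case using Suc by (cases "i = Suc j") auto
qed simp

lemma greedy_SucE:
  fixes b :: "nat \<Rightarrow> nat \<Rightarrow> 'a::{ring_1,finite}"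
  assumes B: "is_basis n b" and lt: "strict_total_order lt" and i: "Suc i \<le> n"
  obtains
    "\<And>x. x \<in> Vsp b (Suc i) - Vsp b i \<Longrightarrow> \<not> good P \<Gamma> (greedy n b lt P \<Gamma> i) x"
    "greedy n b lt P \<Gamma> (Suc i) = greedy n b lt P \<Gamma> i"
  | a where "a \<in> Vsp b (Suc i) - Vsp b i" "good P \<Gamma> (greedy n b lt P \<Gamma> i) a"
    "\<And>y. y \<in> Vsp b (Suc i) - Vsp b i \<Longrightarrow> good P \<Gamma> (greedy n b lt P \<Gamma> i) y \<Longrightarrow> y \<noteq> a \<Longrightarrow>
      lexless n b lt a y"
    "greedy n b lt P \<Gamma> (Suc i) = adjoin a (greedy n b lt P \<Gamma> i)"
proof -
  define G where "G = {a \<in> Vsp b (Suc i) - Vsp b i. good P \<Gamma> (greedy n b lt P \<Gamma> i) a}"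
  have step: "greedy n b lt P \<Gamma> (Suc i) = (if G = {} then greedy n b lt P \<Gamma> i
      else adjoin (THE a. a \<in> G \<and> (\<forall>y\<in>G. y \<noteq> a \<longrightarrow> lexless n b lt a y)) (greedy n b lt P \<Gamma> i))"
    by (simp only: greedy_Suc_if G_def Let_def)
  show ?thesis
  proof (cases "G = {}")
    case True
    then show ?thesis using that(1) step by (auto simp: G_def)
  next
    case False
    have "G \<subseteq> level_set b (Suc i)" unfolding G_def by auto
    from ex1_lexless_least[OF B lt _ i this False]
    have ex1: "\<exists>!a. a \<in> G \<and> (\<forall>y\<in>G. y \<noteq> a \<longrightarrow> lexless n b lt a y)" by simp
    define a where "a = (THE a. a \<in> G \<and> (\<forall>y\<in>G. y \<noteq> a \<longrightarrow> lexless n b lt a y))"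
    have "a \<in> G" "\<forall>y\<in>G. y \<noteq> a \<longrightarrow> lexless n b lt a y"
      using theI'[OF ex1] unfolding a_def by blast+
    moreover have "greedy n b lt P \<Gamma> (Suc i) = adjoin a (greedy n b lt P \<Gamma> i)"
      using step False by (simp add: a_def)
    ultimately show ?thesis using that(2) unfolding G_def by blast
  qed
qed

lemma greedy_subset_Vsp:
  fixes b :: "nat \<Rightarrow> nat \<Rightarrow> 'a::{ring_1,finite}"
  assumes B: "is_basis n b" and lt: "strict_total_order lt"
  shows "i \<le> n \<Longrightarrow> greedy n b lt P \<Gamma> i \<subseteq> Vsp b i"
proof (induction i)
  case 0
  then show ?case using zero_in_Vsp by simp
next
  case (Suc i)
  then have IH: "greedy n b lt P \<Gamma> i \<subseteq> Vsp b (Suc i)" using Vsp_mono[of i "Suc i" b] by simp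
  from B lt \<open>Suc i \<le> n\<close> show ?case
  proof (cases rule: greedy_SucE[where P = P and \<Gamma> = \<Gamma>])
    case 1
    then show ?thesis using IH by simp
  next
    case (2 a)
    then show ?thesis using IH adjoin_subset_Vsp[of a b "Suc i"] by simp
  qed
qed

lemma good_antimono: "C \<subseteq> D \<Longrightarrow> good P \<Gamma> D x \<Longrightarrow> good P \<Gamma> C x"
  unfolding good_def by blast

lemma good_vadd:
  assumes "left_submodule C" "c \<in> C" "good P \<Gamma> C x"
  shows "good P \<Gamma> C (vadd x c)"
  unfolding good_def
proof (intro ballI)
  fix g c' assume "g \<in> \<Gamma>" "c' \<in> C"
  moreover have "vadd (vsmult g c) c' \<in> C" using assms(1,2) \<open>c' \<in> C\<close>
    unfolding left_submodule_def by blast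
  ultimately have "P (vadd (vsmult g x) (vadd (vsmult g c) c'))"
    using assms(3) unfolding good_def by blast
  moreover have "vadd (vsmult g (vadd x c)) c' = vadd (vsmult g x) (vadd (vsmult g c) c')"
    unfolding vadd_def vsmult_def by (simp add: algebra_simps)
  ultimately show "P (vadd (vsmult g (vadd x c)) c')" by simp
qed

lemma generator_system_nonzero: "generator_system \<Gamma> \<Longrightarrow> \<gamma> \<in> \<Gamma> \<Longrightarrow> \<gamma> \<noteq> 0"
  unfolding generator_system_def by (elim conjE) (rule bspec)

lemma good_imp_nonzero_multiple:
  fixes x :: "nat \<Rightarrow> 'a::{ring_1,finite}"
  assumes \<Gamma>: "generator_system \<Gamma>" and P: "left_multiplicative n P"
    and C: "left_submodule C" "C \<subseteq> vecs n" and x: "x \<in> vecs n" "good P \<Gamma> C x"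
    and "\<beta> \<noteq> 0" "c \<in> C"
  shows "P (vadd (vsmult \<beta> x) c)"
proof -
  have "lprin \<beta> \<noteq> {0}" using lprin_self[of \<beta>] \<open>\<beta> \<noteq> 0\<close> by auto
  then have "\<exists>!\<gamma>. \<gamma> \<in> \<Gamma> \<and> lprin \<gamma> = lprin \<beta>"
    using \<Gamma> left_ideal_lprin[of \<beta>] unfolding generator_system_def by simp
  then obtain \<gamma> where \<gamma>: "\<gamma> \<in> \<Gamma>" "lprin \<gamma> = lprin \<beta>" by (auto dest: ex1_implies_ex)
  obtain u where u: "u \<in> units" "\<beta> = u * \<gamma>" using lprin_eq_imp_unit_mult[OF \<gamma>(2)[symmetric]] .
  then obtain v where v: "u * v = 1" "v * u = 1" unfolding units_def by blast
  have "vsmult v c \<in> C" using C(1) \<open>c \<in> C\<close> unfolding left_submodule_def by blast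
  then have "P (vadd (vsmult \<gamma> x) (vsmult v c))" using x(2) \<gamma>(1) unfolding good_def by blast
  moreover have "vadd (vsmult \<gamma> x) (vsmult v c) \<in> vecs n"
    using x(1) C(2) \<open>c \<in> C\<close> unfolding vecs_def vadd_def vsmult_def by auto
  moreover have "vsmult u (vadd (vsmult \<gamma> x) (vsmult v c)) = vadd (vsmult \<beta> x) c"
    unfolding vadd_def vsmult_def u(2) by (simp add: distrib_left mult.assoc[symmetric] v(1))
  moreover have "P (vsmult u w) = P w" if "w \<in> vecs n" for w
    using P u(1) that unfolding left_multiplicative_def by blast
  ultimately show ?thesis by metis
qed

lemma good_vsmult_unit:
  fixes x :: "nat \<Rightarrow> 'a::{ring_1,finite}"
  assumes \<Gamma>: "generator_system \<Gamma>" and P: "left_multiplicative n P"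
    and C: "left_submodule C" "C \<subseteq> vecs n" and x: "x \<in> vecs n" "good P \<Gamma> C x"
    and "\<alpha> \<in> units"
  shows "good P \<Gamma> C (vsmult \<alpha> x)"
  unfolding good_def
proof (intro ballI)
  fix g c assume "g \<in> \<Gamma>" "c \<in> C"
  then have "g * \<alpha> \<noteq> 0"
    using generator_system_nonzero[OF \<Gamma>] units_mult_nonzero(2)[OF \<open>\<alpha> \<in> units\<close>] by blast
  then have "P (vadd (vsmult (g * \<alpha>) x) c)"
    using good_imp_nonzero_multiple[OF \<Gamma> P C x] \<open>c \<in> C\<close> by blast
  moreover have "vsmult (g * \<alpha>) x = vsmult g (vsmult \<alpha> x)"
    unfolding vsmult_def by (simp add: mult.assoc)
  ultimately show "P (vadd (vsmult g (vsmult \<alpha> x)) c)" by simp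
qed

lemma coord_Suc_in_lprin_if_least:
  fixes b :: "nat \<Rightarrow> nat \<Rightarrow> 'a::{ring_1,finite}"
  assumes PL: "principal_left_ideal_ring TYPE('a)" and RS: "respectful lt"
    and B: "is_basis n b" and \<Gamma>: "generator_system \<Gamma>" and P: "left_multiplicative n P"
    and i: "Suc i \<le> n"
    and C: "left_submodule C1" "C1 \<subseteq> Vsp b (Suc i)" "C0 \<subseteq> C1"
    and a: "a \<in> C1" "a \<in> Vsp b (Suc i) - Vsp b i"
    and a_least: "\<And>y. y \<in> Vsp b (Suc i) - Vsp b i \<Longrightarrow> good P \<Gamma> C0 y \<Longrightarrow> y \<noteq> a \<Longrightarrow>
      lexless n b lt a y"
    and x: "x \<in> Vsp b (Suc i) - Vsp b i" "good P \<Gamma> C1 x"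
  shows "coord n b x (Suc i) \<in> lprin (coord n b a (Suc i))"
proof (rule ccontr)
  define X Y where "X = coord n b x (Suc i)" and "Y = coord n b a (Suc i)"
  have irrefl: "\<And>p. \<not> lt p p" and trans: "\<And>p q r. lt p q \<Longrightarrow> lt q r \<Longrightarrow> lt p r"
    using RS unfolding respectful_def strict_total_order_def by blast+
  assume "X \<notin> lprin Y"
  then obtain t where t: "lprin Y \<subset> lprin (X + t * Y)" "X + t * Y \<noteq> 0"
    using lprin_psubset_add_mult[OF PL] by blast
  moreover have "Y \<noteq> 0" using Vsp_iff_coord_Suc_eq_0[OF B i, of a] a(2) by (simp add: Y_def)
  ultimately obtain \<alpha> where "\<alpha> \<in> units" and "\<forall>u\<in>units. lt (\<alpha> * (X + t * Y)) (u * Y)"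
    using RS unfolding respectful_def by blast
  then have \<alpha>: "\<alpha> \<in> units" "lt (\<alpha> * (X + t * Y)) Y" using one_in_units by force+
  define z where "z = vadd (vsmult \<alpha> x) (vsmult (\<alpha> * t) a)"
  have zV: "z \<in> Vsp b (Suc i)" using x(1) a(2) by (simp add: z_def vadd_in_Vsp vsmult_in_Vsp)
  have "coord n b z (Suc i) = \<alpha> * X + (\<alpha> * t) * Y"
    using x(1) a(2) by (simp add: z_def X_def Y_def coord_vadd[OF B i] coord_vsmult[OF B i]
        vsmult_in_Vsp)
  then have z_top: "coord n b z (Suc i) = \<alpha> * (X + t * Y)" by (simp add: algebra_simps)
  then have "z \<notin> Vsp b i"
    using Vsp_iff_coord_Suc_eq_0[OF B i zV] units_mult_nonzero(1)[OF \<alpha>(1) t(2)] by simp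
  have vecs: "C1 \<subseteq> vecs n" "x \<in> vecs n" using C(2) x(1) Vsp_subset_vecs[OF B i] by blast+
  have "vsmult (\<alpha> * t) a \<in> C1" using C(1) a(1) unfolding left_submodule_def by blast
  then have "good P \<Gamma> C1 z"
    unfolding z_def using good_vadd[OF C(1)] good_vsmult_unit[OF \<Gamma> P C(1) vecs x(2) \<alpha>(1)] by blast
  then have "good P \<Gamma> C0 z" by (rule good_antimono[OF C(3)])
  moreover have top_ne: "Y \<noteq> \<alpha> * (X + t * Y)" using \<alpha>(2) irrefl by auto
  then have "z \<noteq> a" using z_top by (auto simp: Y_def)
  ultimately have "lexless n b lt a z" using a_least zV \<open>z \<notin> Vsp b i\<close> by blast
  then have "lt Y (\<alpha> * (X + t * Y))"
    using lexless_level_iff_top[of "Suc i" n a b z lt] a(2) zV \<open>z \<notin> Vsp b i\<close> i z_top top_ne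
    by (simp add: Y_def)
  then show False using \<alpha>(2) irrefl trans by blast
qed

lemma greedy_Suc_closed:
  fixes b :: "nat \<Rightarrow> nat \<Rightarrow> 'a::{ring_1,finite}"
  assumes PL: "principal_left_ideal_ring TYPE('a)" and RS: "respectful lt"
    and B: "is_basis n b" and \<Gamma>: "generator_system \<Gamma>" and P: "left_multiplicative n P"
    and i: "Suc i \<le> n"
    and IH: "\<And>w. w \<in> Vsp b i \<Longrightarrow> good P \<Gamma> (greedy n b lt P \<Gamma> i) w \<Longrightarrow> w \<in> greedy n b lt P \<Gamma> i"
    and x: "x \<in> Vsp b (Suc i) - Vsp b i" "good P \<Gamma> (greedy n b lt P \<Gamma> (Suc i)) x"
  shows "x \<in> greedy n b lt P \<Gamma> (Suc i)"
proof -
  let ?C0 = "greedy n b lt P \<Gamma> i" and ?C1 = "greedy n b lt P \<Gamma> (Suc i)"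
  have lt: "strict_total_order lt" using RS unfolding respectful_def by blast
  have C01: "?C0 \<subseteq> ?C1" by (rule greedy_mono) simp
  from B lt i show ?thesis
  proof (cases rule: greedy_SucE[where P = P and \<Gamma> = \<Gamma>])
    case 1
    then show ?thesis using good_antimono[OF C01 x(2)] x(1) by blast
  next
    case (2 a)
    have sub: "left_submodule ?C1" "left_submodule ?C0" by (rule left_submodule_greedy)+
    have "a \<in> ?C1" using 2(4) self_in_adjoin[OF sub(2)] by simp
    then have "coord n b x (Suc i) \<in> lprin (coord n b a (Suc i))"
      using coord_Suc_in_lprin_if_least[OF PL RS B \<Gamma> P i sub(1) greedy_subset_Vsp[OF B lt i] C01]
        2(1,3) x by blast
    then obtain r where r: "coord n b x (Suc i) = r * coord n b a (Suc i)"
      unfolding lprin_def by blast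
    define w where "w = vadd x (vsmult (- r) a)"
    have "w \<in> Vsp b (Suc i)" using x(1) 2(1) by (simp add: w_def vadd_in_Vsp vsmult_in_Vsp)
    moreover have "coord n b w (Suc i) = 0"
      using x(1) 2(1) r by (simp add: w_def coord_vadd[OF B i] coord_vsmult[OF B i] vsmult_in_Vsp)
    ultimately have "w \<in> Vsp b i" using Vsp_iff_coord_Suc_eq_0[OF B i] by blast
    moreover have "vsmult (- r) a \<in> ?C1"
      using sub(1) \<open>a \<in> ?C1\<close> unfolding left_submodule_def by blast
    then have "good P \<Gamma> ?C1 w" unfolding w_def by (rule good_vadd[OF sub(1) _ x(2)])
    then have "good P \<Gamma> ?C0 w" by (rule good_antimono[OF C01])
    ultimately have "w \<in> ?C0" by (rule IH)
    moreover have "x = vadd (vsmult r a) w"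
      unfolding w_def vadd_def vsmult_def by (simp add: algebra_simps)
    ultimately show ?thesis unfolding 2(4) adjoin_def by blast
  qed
qed

lemma greedy_closed:
  fixes b :: "nat \<Rightarrow> nat \<Rightarrow> 'a::{ring_1,finite}"
  assumes PL: "principal_left_ideal_ring TYPE('a)" and RS: "respectful lt"
    and B: "is_basis n b" and \<Gamma>: "generator_system \<Gamma>" and P: "left_multiplicative n P"
  shows "i \<le> n \<Longrightarrow> x \<in> Vsp b i \<Longrightarrow> good P \<Gamma> (greedy n b lt P \<Gamma> i) x \<Longrightarrow>
    x \<in> greedy n b lt P \<Gamma> i"
proof (induction i arbitrary: x)
  case 0
  then show ?case by (simp add: Vsp_0)
next
  case (Suc i)
  have C01: "greedy n b lt P \<Gamma> i \<subseteq> greedy n b lt P \<Gamma> (Suc i)" by (rule greedy_mono) simp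
  have "i \<le> n" using Suc.prems(1) by simp
  note IH = Suc.IH[OF this]
  show ?case
  proof (cases "x \<in> Vsp b i")
    case True
    have "x \<in> greedy n b lt P \<Gamma> i" by (rule IH[OF True good_antimono[OF C01 Suc.prems(3)]])
    then show ?thesis using C01 by blast
  next
    case False
    then have "x \<in> Vsp b (Suc i) - Vsp b i" using Suc.prems(2) by blast
    with greedy_Suc_closed[OF PL RS B \<Gamma> P Suc.prems(1)] show ?thesis
      using IH Suc.prems(3) by blast
  qed
qed

theorem mainTheorem7:
  fixes n :: nat
    and b :: "nat \<Rightarrow> nat \<Rightarrow> 'a::{ring_1, finite}"
    and lt :: "'a \<Rightarrow> 'a \<Rightarrow> bool"
    and P :: "(nat \<Rightarrow> 'a) \<Rightarrow> bool"
    and \<Gamma> :: "'a set"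
  assumes "principal_left_ideal_ring TYPE('a)"
    and "respectful lt"
    and "is_basis n b"
    and "left_multiplicative n P"
    and "generator_system \<Gamma>"
  shows "\<forall>i\<in>{1..n}. \<forall>x \<in> Vsp b i - Vsp b (i - 1).
           good P \<Gamma> (greedy n b lt P \<Gamma> i) x \<longrightarrow> x \<in> greedy n b lt P \<Gamma> i"
  using greedy_closed[OF assms(1-3,5,4)] by auto

end
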